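(* Let $n\ge 2$ and let $A$, $B$ be $n$-dimensional boxes with closed side lengths $a_1\le\dots\le a_n$ and $b_1\le\dots\le b_n$. Suppose that $A$, in some state, fits inside $B$ in its closed state, and that $B$, in some state, fits inside $A$ in some state $\sigma$. Then in the state $\sigma$ the box $A$ is expanded along a side of closed length $a_1$ (its smallest side), and the expanded length exceeds all other side lengths of $A$, i.e. the expanded smallest side becomes the largest side of $A$.
   Context: A state of an $n$-dimensional box $A$ with closed side lengths $a_1\le\dots\le a_n$ is either closed or expanded along one side $i$: $a_i$ is replaced by $a_i'$ with $a_i\le a_i'\le 2a_i$, other sides unchanged (only one side can expand). The dimension vector of a state is its multiset of side lengths sorted in non-decreasing order. A box $X$ in some state fits inside a box $Y$ in some state if each coordinate of the dimension vector of $Y$ is strictly larger than the corresponding coordinate of that of $X$. *)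

theory Defs
  imports Complex_Main
begin

text \<open>A box is given by the list of its closed side lengths (sorted, positive).
  A state is either closed, or expanded along side i (0-based) to length x.\<close>

datatype box_state = Closed | Expanded nat real

definition valid_state :: "real list \<Rightarrow> box_state \<Rightarrow> bool" where
  "valid_state a s = (case s of
      Closed \<Rightarrow> True
    | Expanded i x \<Rightarrow> i < length a \<and> a ! i \<le> x \<and> x \<le> 2 * a ! i)"

definition dimvec :: "real list \<Rightarrow> box_state \<Rightarrow> real list" where
  "dimvec a s = sort (case s of Closed \<Rightarrow> a | Expanded i x \<Rightarrow> a[i := x])"

definition fits :: "real list \<Rightarrow> real list \<Rightarrow> bool" where
  "fits u v = (length u = length v \<and> (\<forall>k < length u. u ! k < v ! k))"

end

theory Submission
  imports Defs
begin

text \<open>Only the smallest and the largest coordinate of the dimension vectors matter. A state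
  never decreases the minimum or the maximum side length, and fitting strictly increases
  both. Following the chain of states from A via B back to A, both the minimum and the maximum
  side of A in the state \<sigma> are strictly larger than those of the closed box. Expanding a
  single side can raise the minimum only if it is the unique shortest side, and can raise the
  maximum only if the new length exceeds every closed side length.\<close>

lemma Min_set_mono_list_all2:
  fixes xs ys :: "'a::linorder list"
  assumes "list_all2 (\<le>) xs ys" and "xs \<noteq> []"
  shows "Min (set xs) \<le> Min (set ys)"
proof -
  have "ys \<noteq> []" using assms list_all2_lengthD by fastforce
  then obtain k where k: "k < length ys" "ys ! k = Min (set ys)"
    by (metis Min_in finite_set in_set_conv_nth set_empty)
  have "k < length xs" using k(1) assms(1) list_all2_lengthD by fastforce
  then have "Min (set xs) \<le> xs ! k" by simp
  also have "\<dots> \<le> ys ! k" using assms(1) k(1) list_all2_nthD2 by blast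
  finally show ?thesis using k(2) by simp
qed

lemma Max_set_mono_list_all2:
  fixes xs ys :: "'a::linorder list"
  assumes "list_all2 (\<le>) xs ys" and "xs \<noteq> []"
  shows "Max (set xs) \<le> Max (set ys)"
proof -
  obtain k where k: "k < length xs" "xs ! k = Max (set xs)"
    by (metis Max_in assms(2) finite_set in_set_conv_nth set_empty)
  have "k < length ys" using k(1) assms(1) list_all2_lengthD by fastforce
  have "xs ! k \<le> ys ! k" using assms(1) k(1) list_all2_nthD by blast
  also have "\<dots> \<le> Max (set ys)" using \<open>k < length ys\<close> by simp
  finally show ?thesis using k(2) by simp
qed

lemma sorted_nth_0_eq_Min:
  fixes xs :: "'a::linorder list"
  assumes "sorted xs" and "xs \<noteq> []"
  shows "xs ! 0 = Min (set xs)"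
  using assms by (intro Min_eqI[symmetric]) (auto simp: in_set_conv_nth sorted_nth_mono)

lemma sorted_nth_last_eq_Max:
  fixes xs :: "'a::linorder list"
  assumes "sorted xs" and "xs \<noteq> []"
  shows "xs ! (length xs - 1) = Max (set xs)"
  using assms by (intro Max_eqI [symmetric])
    (auto simp: in_set_conv_nth sorted_nth_mono intro!: exI[of _ "length xs - 1"])

lemma fits_sorted_Min_Max_less:
  assumes "fits u v" and "sorted u" and "sorted v" and "u \<noteq> []"
  shows "Min (set u) < Min (set v) \<and> Max (set u) < Max (set v)"
proof -
  have len: "length v = length u" and less: "\<And>k. k < length u \<Longrightarrow> u ! k < v ! k"
    using assms(1) by (auto simp: fits_def)
  have "v \<noteq> []" using len assms(4) by auto
  then show ?thesis
    using less[of 0] less[of "length u - 1"] assms(2-4) len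
    by (simp flip: sorted_nth_0_eq_Min sorted_nth_last_eq_Max)
qed

lemma sorted_dimvec: "sorted (dimvec a s)"
  by (simp add: dimvec_def)

lemma length_dimvec: "length (dimvec a s) = length a"
  by (simp add: dimvec_def split: box_state.split)

lemma set_dimvec_Closed: "set (dimvec a Closed) = set a"
  by (simp add: dimvec_def)

lemma set_dimvec_Expanded: "set (dimvec a (Expanded i x)) = set (a[i := x])"
  by (simp add: dimvec_def)

lemma Min_Max_dimvec_ge:
  assumes "valid_state a s" and "a \<noteq> []"
  shows "Min (set a) \<le> Min (set (dimvec a s)) \<and> Max (set a) \<le> Max (set (dimvec a s))"
proof (cases s)
  case Closed
  then show ?thesis by (simp add: set_dimvec_Closed)
next
  case (Expanded i x)
  have "i < length a" "a ! i \<le> x" using assms(1) Expanded by (simp_all add: valid_state_def)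
  then have "list_all2 (\<le>) a (a[i := x])"
    by (simp add: list_all2_conv_all_nth nth_list_update)
  then show ?thesis
    unfolding Expanded set_dimvec_Expanded
    using Min_set_mono_list_all2[OF _ assms(2)] Max_set_mono_list_all2[OF _ assms(2)] by blast
qed

lemma fits_dimvec_Min_Max_less:
  assumes "valid_state a s" and "fits (dimvec a s) (dimvec b t)" and "a \<noteq> []"
  shows "Min (set a) < Min (set (dimvec b t)) \<and> Max (set a) < Max (set (dimvec b t))"
proof -
  have "dimvec a s \<noteq> []" using assms(3) length_dimvec by (metis length_0_conv)
  then show ?thesis
    using fits_sorted_Min_Max_less[OF assms(2) sorted_dimvec sorted_dimvec]
      Min_Max_dimvec_ge[OF assms(1,3)]
    by linarith
qed

lemma Min_dimvec_Expanded_gt_imp_shortest: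
  assumes "Min (set a) < Min (set (dimvec a (Expanded i x)))" and "j < length a" and "j \<noteq> i"
  shows "a ! i < a ! j"
proof -
  have "Min (set a) \<in> set a" using assms(2) by (intro Min_in) auto
  then obtain k where k: "k < length a" "a ! k = Min (set a)" by (auto simp: in_set_conv_nth)
  have "k = i"
  proof (rule ccontr)
    assume "k \<noteq> i"
    then have "a ! k \<in> set (a[i := x])" using k(1)
      by (metis length_list_update nth_list_update_neq nth_mem)
    then have "Min (set (a[i := x])) \<le> a ! k" by simp
    then show False using assms(1) k(2) unfolding set_dimvec_Expanded by linarith
  qed
  have "a ! j \<in> set (a[i := x])" using assms(2,3)
    by (metis length_list_update nth_list_update_neq nth_mem)
  then have "Min (set (a[i := x])) \<le> a ! j" by simp
  then have "Min (set a) < a ! j" using assms(1) unfolding set_dimvec_Expanded by linarith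
  with k(2) \<open>k = i\<close> show ?thesis by simp
qed

lemma Max_dimvec_Expanded_gt_imp_longest:
  assumes "Max (set a) < Max (set (dimvec a (Expanded i x)))" and "j < length a"
  shows "a ! j < x"
proof -
  let ?M = "Max (set (a[i := x]))"
  have "a[i := x] \<noteq> []" using assms(2) by auto
  then have "?M \<in> set (a[i := x])" by (intro Max_in) auto
  then have "?M \<in> insert x (set a)" by (rule subsetD[OF set_update_subset_insert])
  moreover have "?M \<notin> set a"
    using assms(1) unfolding set_dimvec_Expanded by (metis Max_ge finite_set leD)
  ultimately have "?M = x" by blast
  moreover have "a ! j \<le> Max (set a)" using assms(2) by simp
  ultimately show ?thesis using assms(1) unfolding set_dimvec_Expanded by linarith
qed

theorem lemma8:
  fixes n :: nat and a b :: "real list" and \<sigma> :: box_state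
  assumes "n \<ge> 2"
    and "length a = n" and "length b = n"
    and "sorted a" and "sorted b"
    and "\<forall>x \<in> set a. 0 < x" and "\<forall>x \<in> set b. 0 < x"
    and "\<exists>s. valid_state a s \<and> fits (dimvec a s) (dimvec b Closed)"
    and "\<exists>t. valid_state b t \<and> fits (dimvec b t) (dimvec a \<sigma>)"
    and "valid_state a \<sigma>"
  shows "\<exists>i x. \<sigma> = Expanded i x \<and> a ! i = a ! 0 \<and> (\<forall>j < n. j \<noteq> i \<longrightarrow> a ! j < x)"
proof -
  obtain s t where s: "valid_state a s" "fits (dimvec a s) (dimvec b Closed)"
    and t: "valid_state b t" "fits (dimvec b t) (dimvec a \<sigma>)"
    using assms(8,9) by blast
  have "a \<noteq> []" "b \<noteq> []" using assms(1-3) by auto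
  have "Min (set a) < Min (set b) \<and> Max (set a) < Max (set b)"
    using fits_dimvec_Min_Max_less[OF s \<open>a \<noteq> []\<close>] unfolding set_dimvec_Closed .
  moreover have "Min (set b) < Min (set (dimvec a \<sigma>)) \<and> Max (set b) < Max (set (dimvec a \<sigma>))"
    using fits_dimvec_Min_Max_less[OF t \<open>b \<noteq> []\<close>] .
  ultimately have min_gt: "Min (set a) < Min (set (dimvec a \<sigma>))"
    and max_gt: "Max (set a) < Max (set (dimvec a \<sigma>))"
    by linarith+
  then obtain i x where \<sigma>: "\<sigma> = Expanded i x"
    by (cases \<sigma>) (auto simp: set_dimvec_Closed)
  have "i < n" using assms(2,10) \<sigma> by (simp add: valid_state_def)
  have "i = 0"
  proof (rule ccontr)
    assume "i \<noteq> 0"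
    then have "a ! i < a ! 0"
      using Min_dimvec_Expanded_gt_imp_shortest[of a i x 0] min_gt \<sigma> assms(1,2) by simp
    moreover have "a ! 0 \<le> a ! i" using assms(4) \<open>i < n\<close> assms(2) sorted_nth_mono by blast
    ultimately show False by simp
  qed
  then show ?thesis
    using Max_dimvec_Expanded_gt_imp_longest[of a i x] max_gt \<sigma> assms(2) by blast
qed

end
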